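(* Let $p=p_n\in(0,1)$ with $f_n:=n p_n\to 0$, and let $G\sim\mathcal{G}(n,p_n)$ with $m$ its number of edges. Let $\phi(\delta)=(1+\delta)\ln(1+\delta)-\delta$ for $\delta\ge 0$, and set $$\delta_n=\phi^{-1}\left(\frac{2\ln 2}{f_n}\right),\qquad C_n=\frac{1}{1+(1+\delta_n)\frac{n-1}{n}f_n}.$$ For $1\le u\le n$ define $$w_n(u)=\sum_{i=n-u}^{n}\binom{i}{i-(n-u)}(1-p_n)^{\binom{i-(n-u)}{2}}\,\mathbb{P}\left(m\ge\frac{n^2}{2u}-\frac{n}{2}\right),$$ and $\mathbb{T}^1(n,p)=\sum_{1\le u\le nC_n}w_n(u)$. Then $\mathbb{T}^1(n,p)$ has at most polynomial growth in $n$.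
   Context: $\mathcal{G}(n,p)$ is the binomial random graph on $n$ vertices in which each of the $\binom{n}{2}$ pairs of vertices is an edge with probability $p$, independently. $\phi$ is increasing on $[0,\infty)$, so $\phi^{-1}$ is well defined. The quantity $w_n(u)$ is the paper's bound on the expected number of nodes with potential $u$ in the best-first branch-and-bound search tree for maximum independent set (potential of a partial solution $S\subseteq\{v_1,\dots,v_i\}$ being $|S|+n-i$). *)

theory Defs
  imports "HOL-Probability.Probability" "HOL-Library.Landau_Symbols"
begin

definition vertex_pairs :: "nat \<Rightarrow> nat set set" where
  "vertex_pairs n = {e. \<exists>a b. a < b \<and> b < n \<and> e = {a, b}}"

definition gnp :: "nat \<Rightarrow> real \<Rightarrow> nat set set pmf" where
  "gnp n p = map_pmf (\<lambda>f. {e \<in> vertex_pairs n. f e})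
      (Pi_pmf (vertex_pairs n) False (\<lambda>_. bernoulli_pmf p))"

definition phi :: "real \<Rightarrow> real" where
  "phi \<delta> = (1 + \<delta>) * ln (1 + \<delta>) - \<delta>"

definition phi_inv :: "real \<Rightarrow> real" where
  "phi_inv y = (THE \<delta>. \<delta> \<ge> 0 \<and> phi \<delta> = y)"

definition delta_n :: "(nat \<Rightarrow> real) \<Rightarrow> nat \<Rightarrow> real" where
  "delta_n p n = phi_inv (2 * ln 2 / (real n * p n))"

definition C_n :: "(nat \<Rightarrow> real) \<Rightarrow> nat \<Rightarrow> real" where
  "C_n p n = 1 / (1 + (1 + delta_n p n) * ((real n - 1) / real n) * (real n * p n))"

definition w_n :: "(nat \<Rightarrow> real) \<Rightarrow> nat \<Rightarrow> nat \<Rightarrow> real" where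
  "w_n p n u = (\<Sum>i = n - u..n.
      real (i choose (i - (n - u))) * (1 - p n) ^ ((i - (n - u)) choose 2) *
      measure_pmf.prob (gnp n (p n))
        {E. real (card E) \<ge> (real n)\<^sup>2 / (2 * real u) - real n / 2})"

definition T1 :: "(nat \<Rightarrow> real) \<Rightarrow> nat \<Rightarrow> real" where
  "T1 p n = (\<Sum>u \<in> {u. 1 \<le> u \<and> real u \<le> real n * C_n p n}. w_n p n u)"

end

theory Submission
  imports Defs
begin

text \<open>
  With \<open>\<mu> = (n choose 2) p\<^sub>n\<close>, the choice of \<open>\<delta>\<^sub>n\<close> makes \<open>\<mu> \<phi>(\<delta>\<^sub>n) = (n - 1) ln 2\<close>, and
  \<open>u \<le> n C\<^sub>n\<close> is exactly what puts the edge threshold \<open>n\<^sup>2/(2u) - n/2\<close> above \<open>(1 + \<delta>\<^sub>n) \<mu>\<close>.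
  The Chernoff bound \<open>P(m \<ge> (1 + \<delta>) \<mu>) \<le> exp (-\<mu> \<phi>(\<delta>))\<close> therefore bounds the probability in
  \<open>w\<^sub>n(u)\<close> by \<open>2 / 2\<^sup>n\<close>, which absorbs the binomial coefficients (each at most \<open>2\<^sup>n\<close>):
  \<open>w\<^sub>n(u) \<le> 2 (n + 1)\<close>, hence \<open>T1 p n \<le> 4 n\<^sup>2\<close>.
\<close>

lemma phi_strict_mono_on: "strict_mono_on {0..} phi"
proof (rule strict_mono_onI)
  fix a b :: real assume "a \<in> {0..}" "b \<in> {0..}" "a < b"
  show "phi a < phi b"
  proof (rule DERIV_pos_imp_increasing_open[OF \<open>a < b\<close>])
    fix x assume x: "a < x" "x < b"
    have "DERIV phi x :> ln (1 + x)"
      unfolding phi_def using x \<open>a \<in> {0..}\<close> by (auto intro!: derivative_eq_intros)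
    moreover have "ln (1 + x) > 0" using x \<open>a \<in> {0..}\<close> by simp
    ultimately show "\<exists>y. DERIV phi x :> y \<and> y > 0" by blast
  next
    show "continuous_on {a..b} phi"
      unfolding phi_def using \<open>a \<in> {0..}\<close> by (auto intro!: continuous_intros)
  qed
qed

lemma phi_surj_nonneg:
  assumes "0 \<le> y"
  obtains \<delta> where "0 \<le> \<delta>" "phi \<delta> = y"
proof -
  define D where "D = y + exp 2"
  have "0 < 1 + D" using assms exp_gt_zero[of 2] unfolding D_def by linarith
  moreover have "exp 2 \<le> 1 + D" using assms unfolding D_def by simp
  ultimately have "2 \<le> ln (1 + D)" by (subst ln_ge_iff)
  hence "(1 + D) * 2 \<le> (1 + D) * ln (1 + D)"
    using \<open>0 < 1 + D\<close> by (intro mult_left_mono) auto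
  hence "D + 2 \<le> phi D" unfolding phi_def by (simp add: algebra_simps)
  hence "y \<le> phi D" using exp_gt_zero[of 2] unfolding D_def by linarith
  moreover have "phi 0 \<le> y" using assms by (simp add: phi_def)
  moreover have "continuous_on {0..D} phi"
    unfolding phi_def D_def using assms by (auto intro!: continuous_intros)
  moreover have "0 \<le> D" using assms unfolding D_def by simp
  ultimately show ?thesis using IVT'[of phi 0 y D] that by auto
qed

lemma phi_inv:
  assumes "0 \<le> y"
  shows "0 \<le> phi_inv y" and "phi (phi_inv y) = y"
proof -
  obtain \<delta> where \<delta>: "0 \<le> \<delta>" "phi \<delta> = y" using phi_surj_nonneg[OF assms] .
  have "\<exists>!\<delta>. 0 \<le> \<delta> \<and> phi \<delta> = y"
    using \<delta> strict_mono_on_eqD[OF phi_strict_mono_on] by auto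
  from theI'[OF this] show "0 \<le> phi_inv y" "phi (phi_inv y) = y"
    unfolding phi_inv_def by auto
qed

lemma vertex_pairs_eq: "vertex_pairs n = {B. B \<subseteq> {0..<n} \<and> card B = 2}"
proof (intro set_eqI iffI)
  fix e assume "e \<in> vertex_pairs n"
  thus "e \<in> {B. B \<subseteq> {0..<n} \<and> card B = 2}" unfolding vertex_pairs_def by auto
next
  fix e assume "e \<in> {B. B \<subseteq> {0..<n} \<and> card B = 2}"
  then obtain x y where "e = {x, y}" "x \<noteq> y" "x < n" "y < n" by (auto simp: card_2_iff)
  then have "x < y \<and> e = {x, y} \<or> y < x \<and> e = {y, x}" by auto
  with \<open>x < n\<close> \<open>y < n\<close> show "e \<in> vertex_pairs n" unfolding vertex_pairs_def by blast
qed

lemma finite_vertex_pairs: "finite (vertex_pairs n)"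
  unfolding vertex_pairs_eq by (rule finite_subset[of _ "Pow {0..<n}"]) auto

lemma card_vertex_pairs: "card (vertex_pairs n) = n choose 2"
  unfolding vertex_pairs_eq by (subst n_subsets) auto

lemma real_choose_two: "real (n choose 2) = real n * (real n - 1) / 2"
proof -
  have "even (n * (n - 1))" by (cases "even n") auto
  hence "real (n choose 2) = real (n * (n - 1)) / 2"
    unfolding choose_two by (simp add: real_of_nat_div)
  also have "\<dots> = real n * (real n - 1) / 2" by (cases n) (auto simp: algebra_simps)
  finally show ?thesis .
qed

lemma prob_Pi_pmf_bernoulli_card_ge_exp:
  fixes V :: "'a set" and q s t :: real
  assumes "finite V" and "0 \<le> q" "q \<le> 1" and "0 \<le> s"
  shows "measure_pmf.prob (Pi_pmf V False (\<lambda>_. bernoulli_pmf q))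
           {f. t \<le> real (card {e\<in>V. f e})}
         \<le> exp (- s * t) * exp (real (card V) * q * (exp s - 1))"
proof -
  define M where "M = Pi_pmf V False (\<lambda>_. bernoulli_pmf q)"
  define g where "g = (\<lambda>f. \<Prod>e\<in>V. (\<lambda>b. if b then exp s else 1) (f e))"
  have g_eq: "g f = exp (s * real (card {e\<in>V. f e}))" for f
    using \<open>finite V\<close> unfolding g_def
    by (simp add: prod.If_cases Int_def conj_commute exp_of_nat_mult[symmetric] mult.commute)
  have "integrable (measure_pmf M) g"
    unfolding M_def g_def
    by (rule integrable_prod_Pi_pmf[OF \<open>finite V\<close>]) (auto intro: integrable_measure_pmf_finite)
  have "measure_pmf.prob M {f. t \<le> real (card {e\<in>V. f e})}
        \<le> measure_pmf.prob M {f \<in> space M. exp (s * t) \<le> g f}"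
    using \<open>0 \<le> s\<close>
    by (intro measure_pmf.finite_measure_mono) (auto simp: g_eq intro: mult_left_mono)
  also have "\<dots> \<le> measure_pmf.expectation M g / exp (s * t)"
    by (rule integral_Markov_inequality_measure[OF \<open>integrable M g\<close>, of UNIV])
      (auto simp: g_def intro!: AE_I2 prod_nonneg)
  also have "measure_pmf.expectation M g = (q * exp s + (1 - q)) ^ card V"
    unfolding M_def g_def using assms
    by (subst expectation_prod_Pi_pmf) (auto intro: integrable_measure_pmf_finite simp: algebra_simps)
  also have "(q * exp s + (1 - q)) ^ card V \<le> exp (q * (exp s - 1)) ^ card V"
  proof (rule power_mono)
    show "q * exp s + (1 - q) \<le> exp (q * (exp s - 1))"
      using exp_ge_add_one_self[of "q * (exp s - 1)"] by (simp add: algebra_simps)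
    show "0 \<le> q * exp s + (1 - q)" using assms by simp
  qed
  also have "exp (q * (exp s - 1)) ^ card V = exp (real (card V) * q * (exp s - 1))"
    by (simp add: exp_of_nat_mult[symmetric] mult.assoc)
  finally show ?thesis
    unfolding M_def by (simp add: exp_minus divide_inverse mult.commute)
qed

lemma prob_Pi_pmf_bernoulli_card_ge_phi:
  fixes V :: "'a set" and q \<delta> t :: real
  assumes "finite V" and "0 \<le> q" "q \<le> 1" and "0 \<le> \<delta>"
    and "(1 + \<delta>) * real (card V) * q \<le> t"
  shows "measure_pmf.prob (Pi_pmf V False (\<lambda>_. bernoulli_pmf q))
           {f. t \<le> real (card {e\<in>V. f e})}
         \<le> exp (- (real (card V) * q * phi \<delta>))"
proof -
  define s where "s = ln (1 + \<delta>)"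
  define \<mu> where "\<mu> = real (card V) * q"
  have "0 \<le> s" "exp s - 1 = \<delta>" unfolding s_def using \<open>0 \<le> \<delta>\<close> by auto
  have "measure_pmf.prob (Pi_pmf V False (\<lambda>_. bernoulli_pmf q))
          {f. t \<le> real (card {e\<in>V. f e})} \<le> exp (\<mu> * \<delta> - s * t)"
    using prob_Pi_pmf_bernoulli_card_ge_exp[OF assms(1-3) \<open>0 \<le> s\<close>, of t] \<open>exp s - 1 = \<delta>\<close>
    by (simp add: \<mu>_def exp_add[symmetric])
  also have "\<dots> \<le> exp (\<mu> * \<delta> - s * ((1 + \<delta>) * \<mu>))"
    using mult_left_mono[OF assms(5) \<open>0 \<le> s\<close>] by (simp add: \<mu>_def mult.assoc)
  also have "\<mu> * \<delta> - s * ((1 + \<delta>) * \<mu>) = - (\<mu> * phi \<delta>)"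
    unfolding phi_def s_def by (simp add: algebra_simps)
  finally show ?thesis unfolding \<mu>_def .
qed

lemma prob_gnp_card_ge_phi:
  assumes "0 \<le> q" "q \<le> 1" and "0 \<le> \<delta>" and "(1 + \<delta>) * real (n choose 2) * q \<le> t"
  shows "measure_pmf.prob (gnp n q) {E. t \<le> real (card E)}
         \<le> exp (- (real (n choose 2) * q * phi \<delta>))"
proof -
  have "measure_pmf.prob (gnp n q) {E. t \<le> real (card E)}
      = measure_pmf.prob (Pi_pmf (vertex_pairs n) False (\<lambda>_. bernoulli_pmf q))
          {f. t \<le> real (card {e\<in>vertex_pairs n. f e})}"
    unfolding gnp_def by (simp add: vimage_def)
  also have "\<dots> \<le> exp (- (real (n choose 2) * q * phi \<delta>))"
    using prob_Pi_pmf_bernoulli_card_ge_phi[OF finite_vertex_pairs assms(1-3)] assms(4)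
    by (simp add: card_vertex_pairs)
  finally show ?thesis .
qed

lemma delta_n_nonneg:
  fixes p :: "nat \<Rightarrow> real"
  shows "0 < p n \<Longrightarrow> 0 \<le> delta_n p n"
  unfolding delta_n_def by (intro phi_inv) simp

lemma C_n_le_1:
  fixes p :: "nat \<Rightarrow> real"
  assumes "0 < p n"
  shows "C_n p n \<le> 1"
proof -
  have "0 \<le> (1 + delta_n p n) * ((real n - 1) / real n) * (real n * p n)"
    using delta_n_nonneg[of p n] assms by (cases "n = 0") auto
  thus ?thesis unfolding C_n_def by simp
qed

lemma prob_gnp_edges_ge_threshold:
  assumes p: "0 < p n" "p n < 1" and "1 \<le> n" and u: "1 \<le> u" "real u \<le> real n * C_n p n"
  shows "measure_pmf.prob (gnp n (p n))
           {E. real (card E) \<ge> (real n)\<^sup>2 / (2 * real u) - real n / 2} \<le> 2 / 2 ^ n"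
proof -
  define q where "q = p n"
  define \<delta> where "\<delta> = delta_n p n"
  define D where "D = 1 + (1 + \<delta>) * (real n - 1) * q"
  have q: "0 < q" "q < 1" using p unfolding q_def by auto
  have n: "1 \<le> real n" using \<open>1 \<le> n\<close> by simp
  have "0 \<le> \<delta>" unfolding \<delta>_def using delta_n_nonneg[of p n] p by blast
  have phi_\<delta>: "phi \<delta> = 2 * ln 2 / (real n * q)"
    unfolding \<delta>_def delta_n_def q_def using phi_inv(2) p n by simp
  have "(1 + \<delta>) * ((real n - 1) / real n) * (real n * q) = (1 + \<delta>) * (real n - 1) * q"
    using n by simp
  hence "C_n p n = 1 / D" unfolding C_n_def D_def \<delta>_def q_def by simp
  moreover have "1 \<le> D" unfolding D_def using \<open>0 \<le> \<delta>\<close> q n by simp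
  ultimately have "real u * D \<le> real n"
    using u(2) by (simp add: pos_le_divide_eq)
  hence "real u * (D - 1) \<le> real n - real u" by (simp add: algebra_simps)
  hence "real n / (2 * real u) * (real u * (D - 1))
         \<le> real n / (2 * real u) * (real n - real u)"
    by (rule mult_left_mono) (use n in simp)
  moreover have "real n / (2 * real u) * (real u * (D - 1)) = (1 + \<delta>) * real (n choose 2) * q"
    using u(1) unfolding D_def real_choose_two by (simp add: field_simps)
  moreover have "real n / (2 * real u) * (real n - real u) = (real n)\<^sup>2 / (2 * real u) - real n / 2"
    using u(1) by (simp add: field_simps power2_eq_square)
  ultimately have "(1 + \<delta>) * real (n choose 2) * q \<le> (real n)\<^sup>2 / (2 * real u) - real n / 2"
    by simp
  hence "measure_pmf.prob (gnp n q) {E. (real n)\<^sup>2 / (2 * real u) - real n / 2 \<le> real (card E)}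
         \<le> exp (- (real (n choose 2) * q * phi \<delta>))"
    using prob_gnp_card_ge_phi q \<open>0 \<le> \<delta>\<close> by simp
  also have "real (n choose 2) * q * phi \<delta> = (real n - 1) * ln 2"
    unfolding phi_\<delta> real_choose_two using q n by (simp add: field_simps)
  also have "exp (- ((real n - 1) * ln 2)) = 2 / 2 ^ n"
    by (simp add: exp_diff algebra_simps del: exp_ln) (simp add: exp_of_nat_mult)
  finally show ?thesis unfolding q_def .
qed

lemma w_n_nonneg:
  fixes p :: "nat \<Rightarrow> real"
  shows "p n \<le> 1 \<Longrightarrow> 0 \<le> w_n p n u"
  unfolding w_n_def by (intro sum_nonneg) auto

lemma w_n_le:
  fixes p :: "nat \<Rightarrow> real"
  assumes p: "0 < p n" "p n < 1" and "1 \<le> n" and u: "1 \<le> u" "real u \<le> real n * C_n p n"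
  shows "w_n p n u \<le> 2 * (real n + 1)"
proof -
  define P where "P = measure_pmf.prob (gnp n (p n))
    {E. real (card E) \<ge> (real n)\<^sup>2 / (2 * real u) - real n / 2}"
  have P: "0 \<le> P" "P \<le> 2 / 2 ^ n"
    unfolding P_def using prob_gnp_edges_ge_threshold[OF assms] by auto
  have summand_le: "real (i choose k) * (1 - p n) ^ j * P \<le> 2" if "i \<le> n" for i k j
  proof -
    have "real (i choose k) \<le> 2 ^ n"
    proof -
      have "i choose k \<le> (2::nat) ^ n"
        using binomial_le_pow2[of i k] power_increasing[OF \<open>i \<le> n\<close>, of "2::nat"] by linarith
      thus ?thesis by (metis of_nat_le_iff of_nat_numeral of_nat_power)
    qed
    moreover have "0 \<le> (1 - p n) ^ j" "(1 - p n) ^ j \<le> 1" using p by (auto intro: power_le_one)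
    ultimately have "real (i choose k) * (1 - p n) ^ j * P \<le> 2 ^ n * 1 * (2 / 2 ^ n)"
      using P by (intro mult_mono) auto
    also have "\<dots> = 2" by simp
    finally show ?thesis .
  qed
  have "w_n p n u \<le> real (card {n - u..n}) * 2"
    unfolding w_n_def P_def[symmetric] by (rule sum_bounded_above) (use summand_le in auto)
  thus ?thesis by simp
qed

lemma T1_le:
  fixes p :: "nat \<Rightarrow> real"
  assumes "0 < p n" "p n < 1" and "1 \<le> n"
  shows "T1 p n \<le> 4 * real n ^ 2"
proof -
  define S where "S = {u. 1 \<le> u \<and> real u \<le> real n * C_n p n}"
  have "S \<subseteq> {1..n}"
    using mult_left_le[OF C_n_le_1[of p n, OF assms(1)], of "real n"] unfolding S_def by auto
  hence "real (card S) \<le> real n" using card_mono[of "{1..n}" S] by simp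
  have "T1 p n \<le> real (card S) * (2 * (real n + 1))"
    unfolding T1_def S_def[symmetric]
    by (rule sum_bounded_above) (use w_n_le[of p n, OF assms] S_def in auto)
  also have "\<dots> \<le> real n * (2 * (real n + 1))"
    by (rule mult_right_mono[OF \<open>real (card S) \<le> real n\<close>]) simp
  also have "\<dots> \<le> 4 * real n ^ 2" using \<open>1 \<le> n\<close> by (simp add: power2_eq_square algebra_simps)
  finally show ?thesis .
qed

theorem proposition1:
  fixes p :: "nat \<Rightarrow> real"
  assumes "\<And>n. 0 < p n \<and> p n < 1"
    and "(\<lambda>n. real n * p n) \<longlonglongrightarrow> 0"
  shows "\<exists>k::nat. T1 p \<in> O(\<lambda>n. real n ^ k)"
proof (intro exI[of _ 2] bigoI[where c = 4])
  show "\<forall>\<^sub>F n in at_top. norm (T1 p n) \<le> 4 * norm (real n ^ 2)"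
    using eventually_ge_at_top[of 1]
  proof eventually_elim
    case (elim n)
    have "0 \<le> T1 p n"
      unfolding T1_def using w_n_nonneg assms(1) by (intro sum_nonneg) (simp add: less_imp_le)
    with T1_le[of p n] assms(1) elim show ?case by simp
  qed
qed

end
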